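(* Let $k$ be a field of characteristic $\neq 2$ and let $\Psi:\mathfrak g_\boxtimes\to\mathfrak g=\mathfrak{sl}_2(k)\otimes_k\mathcal A$ be the Lie algebra homomorphism described in the context. Then $\Psi$ is surjective.
   Context: $\mathcal A=k[t,t^{-1},(1-t)^{-1}]\subset k(t)$, $t'=1-t^{-1}$, $t''=(1-t)^{-1}$. The Tetrahedron algebra $\mathfrak g_\boxtimes$ is the Lie algebra over $k$ with generators $X_{ij}$ ($i,j\in\{0,1,2,3\}$, $i\neq j$) and relations $X_{ij}+X_{ji}=0$ for $i\neq j$; $[X_{ij},X_{jk}]=2(X_{ij}+X_{jk})$ for mutually distinct $i,j,k$; $[X_{hi},[X_{hi},[X_{hi},X_{jk}]]]=4[X_{hi},X_{jk}]$ for mutually distinct $h,i,j,k$. With $x=\begin{pmatrix}-1&2\\0&1\end{pmatrix}$, $y=\begin{pmatrix}-1&0\\-2&1\end{pmatrix}$, $z=\begin{pmatrix}1&0\\0&-1\end{pmatrix}$, $\Psi$ is the Lie algebra homomorphism determined by $\Psi(X_{12})=x\otimes1$, $\Psi(X_{23})=y\otimes 1$, $\Psi(X_{31})=z\otimes 1$, $\Psi(X_{03})=y\otimes t+z\otimes(t-1)$, $\Psi(X_{01})=z\otimes t'+x\otimes(t'-1)$, $\Psi(X_{02})=x\otimes t''+y\otimes(t''-1)$. *)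

theory Defs
  imports "HOL-Computational_Algebra.Polynomial" "HOL-Computational_Algebra.Fraction_Field"
    "Jordan_Normal_Form.Matrix"
begin

text \<open>The rational function field k(t) is modelled as the fraction field of k[t].\<close>

type_synonym 'k ratfun = "'k poly fract"

definition tvar :: "'k::field ratfun" where
  "tvar = Fract [:0, 1:] 1"

definition kconst :: "'k::field \<Rightarrow> 'k ratfun" where
  "kconst c = Fract [:c:] 1"

text \<open>The algebra A = k[t, t^-1, (1-t)^-1] as a subset of k(t).\<close>

definition A_alg :: "'k::field ratfun set" where
  "A_alg = {Fract p ([:0, 1:] ^ m * [:1, -1:] ^ n) | p m n. True}"

text \<open>sl_2(k) tensor A, realised as the traceless 2x2 matrices with entries in A,
  with Lie bracket the commutator; x tensor f corresponds to f * x.\<close>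

definition sl2A :: "'k::field ratfun mat set" where
  "sl2A = {M \<in> carrier_mat 2 2. M $$ (0,0) + M $$ (1,1) = 0 \<and>
             (\<forall>i<2. \<forall>j<2. M $$ (i,j) \<in> A_alg)}"

definition lie_bracket :: "'a::comm_ring mat \<Rightarrow> 'a mat \<Rightarrow> 'a mat" where
  "lie_bracket M N = M * N - N * M"

definition tens :: "'a::comm_ring mat \<Rightarrow> 'a \<Rightarrow> 'a mat" where
  "tens M f = f \<cdot>\<^sub>m M"

inductive_set lie_gen :: "'k::field ratfun mat set \<Rightarrow> 'k ratfun mat set"
  for S :: "'k ratfun mat set" where
  gen: "M \<in> S \<Longrightarrow> M \<in> lie_gen S"
| zero: "0\<^sub>m 2 2 \<in> lie_gen S"
| add: "M \<in> lie_gen S \<Longrightarrow> N \<in> lie_gen S \<Longrightarrow> M + N \<in> lie_gen S"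
| smult: "M \<in> lie_gen S \<Longrightarrow> kconst c \<cdot>\<^sub>m M \<in> lie_gen S"
| bracket: "M \<in> lie_gen S \<Longrightarrow> N \<in> lie_gen S \<Longrightarrow> lie_bracket M N \<in> lie_gen S"

definition xm :: "'k::field ratfun mat" where
  "xm = mat_of_rows_list 2 [[-1, 2], [0, 1]]"
definition ym :: "'k::field ratfun mat" where
  "ym = mat_of_rows_list 2 [[-1, 0], [-2, 1]]"
definition zm :: "'k::field ratfun mat" where
  "zm = mat_of_rows_list 2 [[1, 0], [0, -1]]"

definition tprime :: "'k::field ratfun" where
  "tprime = 1 - inverse tvar"
definition tdprime :: "'k::field ratfun" where
  "tdprime = inverse (1 - tvar)"

text \<open>Images under Psi of the generators X_12, X_23, X_31, X_03, X_01, X_02.\<close>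

definition Psi_gens :: "'k::field ratfun mat set" where
  "Psi_gens = {tens xm 1, tens ym 1, tens zm 1,
               tens ym tvar + tens zm (tvar - 1),
               tens zm tprime + tens xm (tprime - 1),
               tens xm tdprime + tens ym (tdprime - 1)}"

end

theory Submission imports Defs begin

text \<open>Let \<open>L\<close> be the image of \<open>\<Psi>\<close>. The sums \<open>\<Psi>(X\<^sub>1\<^sub>2) + \<Psi>(X\<^sub>3\<^sub>1) = 2e\<close> and
  \<open>\<Psi>(X\<^sub>2\<^sub>3) + \<Psi>(X\<^sub>3\<^sub>1) = -2f\<close> put the standard basis \<open>e, f, h = [e, f]\<close> of \<open>sl\<^sub>2(k)\<close>
  into \<open>L\<close>. As \<open>2\<close> is invertible, brackets with \<open>e, f, h\<close> show that
  \<open>C = {a. e \<otimes> a \<in> L}\<close> equals \<open>{a. f \<otimes> a \<in> L}\<close> and \<open>{a. h \<otimes> a \<in> L}\<close>, and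
  \<open>[h \<otimes> a, e \<otimes> b] = 2 e \<otimes> ab\<close> makes \<open>C\<close> a \<open>k\<close>-subalgebra of \<open>k(t)\<close>. Projecting
  \<open>\<Psi>(X\<^sub>0\<^sub>3), \<Psi>(X\<^sub>0\<^sub>1), \<Psi>(X\<^sub>0\<^sub>2)\<close> onto the root spaces of \<open>ad h\<close> puts \<open>t\<close>, \<open>t\<^sup>-\<^sup>1\<close> and
  \<open>(1 - t)\<^sup>-\<^sup>1\<close> into \<open>C\<close>, so \<open>A \<subseteq> C\<close> and \<open>sl\<^sub>2(A) \<subseteq> L\<close>. Conversely \<open>sl\<^sub>2(A)\<close> is a
  Lie subalgebra containing the generators.\<close>

definition mat2 :: "'a \<Rightarrow> 'a \<Rightarrow> 'a \<Rightarrow> 'a \<Rightarrow> 'a mat" where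
  "mat2 a b c d = mat_of_rows_list 2 [[a, b], [c, d]]"

lemma mat2_dim [simp]: "dim_row (mat2 a b c d) = 2" "dim_col (mat2 a b c d) = 2"
  and mat2_carrier [simp]: "mat2 a b c d \<in> carrier_mat 2 2"
  by (auto simp: mat2_def mat_of_rows_list_def)

lemma less_2_iff: "(i::nat) < 2 \<longleftrightarrow> i = 0 \<or> i = 1"
  by auto

lemma mat2_index [simp]:
  "mat2 a b c d $$ (0, 0) = a" "mat2 a b c d $$ (0, 1) = b"
  "mat2 a b c d $$ (1, 0) = c" "mat2 a b c d $$ (1, 1) = d"
  "mat2 a b c d $$ (0, Suc 0) = b" "mat2 a b c d $$ (Suc 0, 0) = c"
  "mat2 a b c d $$ (Suc 0, Suc 0) = d"
  by (simp_all add: mat2_def mat_of_rows_list_def)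

lemma mat2_eta: "M \<in> carrier_mat 2 2 \<Longrightarrow> M = mat2 (M $$ (0, 0)) (M $$ (0, 1)) (M $$ (1, 0)) (M $$ (1, 1))"
  by (rule eq_matI) (auto simp: less_2_iff)

lemma mat2_zero: "0\<^sub>m 2 2 = mat2 0 0 0 0"
  by (rule eq_matI) (auto simp: less_2_iff)

lemma mat2_add [simp]: "mat2 a b c d + mat2 a' b' c' d' = mat2 (a + a') (b + b') (c + c') (d + d')"
  by (rule eq_matI) (auto simp: less_2_iff)

lemma mat2_smult [simp]: "f \<cdot>\<^sub>m mat2 a b c d = mat2 (f * a) (f * b) (f * c) (f * d)"
  by (rule eq_matI) (auto simp: less_2_iff)

lemma mat2_mult [simp]:
  "mat2 a b c d * mat2 a' b' c' d' =
     mat2 (a * a' + b * c') (a * b' + b * d') (c * a' + d * c') (c * b' + d * d')"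
  by (rule eq_matI) (auto simp: less_2_iff scalar_prod_def numeral_2_eq_2 less_Suc_eq)

lemma mat2_minus [simp]:
  "mat2 a b c d - mat2 a' b' c' d' = mat2 (a - a') (b - b') (c - c') (d - (d'::'a::ab_group_add))"
  by (rule eq_matI) (auto simp: less_2_iff)

lemma lie_bracket_mat2:
  "lie_bracket (mat2 a b c d) (mat2 a' b' c' d') =
     mat2 (b * c' - c * b') (a * b' + b * d' - a' * b - b' * d)
          (c * a' + d * c' - c' * a - d' * c) (c * b' - b * c')"
  by (simp add: lie_bracket_def algebra_simps)

lemma tens_xm: "tens xm f = mat2 (- f) (2 * f) 0 f"
  and tens_ym: "tens ym f = mat2 (- f) 0 (- 2 * f) f"
  and tens_zm: "tens zm f = mat2 f 0 0 (- f)"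
  by (simp_all add: tens_def xm_def ym_def zm_def mat2_def[symmetric] ac_simps)

lemma kconst_mult: "kconst (a * b) = kconst a * (kconst b :: 'k::field ratfun)"
  by (simp add: kconst_def mult.commute)

lemma kconst_one [simp]: "kconst 1 = (1 :: 'k::field ratfun)"
  by (simp add: kconst_def One_fract_def pCons_one)

lemma kconst_numeral [simp]: "kconst (numeral n) = (numeral n :: 'k::field ratfun)"
  by (metis of_nat_numeral kconst_def of_nat_fract of_nat_poly)

lemma kconst_uminus [simp]: "kconst (- a) = - (kconst a :: 'k::field ratfun)"
  by (simp add: kconst_def)

lemma kconst_inverse_cancel: "(c::'k::field) \<noteq> 0 \<Longrightarrow> kconst (inverse c) * (kconst c * f) = f"
  by (simp add: mult.assoc[symmetric] kconst_mult[symmetric])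

lemma eight_nonzero: "(2::'a::ring_1_no_zero_divisors) \<noteq> 0 \<Longrightarrow> (8::'a) \<noteq> 0"
  by (metis mult_eq_0_iff numeral_Bit0_eq_double mult_2)

subsection \<open>The ring \<open>A\<close>\<close>

lemma Fract_power: "Fract a b ^ n = Fract (a ^ n) (b ^ n :: 'a::idom)"
  by (induction n) (simp_all add: One_fract_def)

lemma A_algI: "Fract p ([:0, 1:] ^ m * [:1, -1:] ^ n) \<in> (A_alg :: 'k::field ratfun set)"
  unfolding A_alg_def by blast

lemma A_algE:
  assumes "f \<in> (A_alg :: 'k::field ratfun set)"
  obtains p m n where "f = Fract p ([:0, 1:] ^ m * [:1, -1:] ^ n)"
  using assms unfolding A_alg_def by blast

lemma A_alg_add:
  assumes "f \<in> A_alg" "g \<in> A_alg" shows "f + g \<in> (A_alg :: 'k::field ratfun set)"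
proof -
  let ?T = "[:0, 1:] :: 'k poly" and ?U = "[:1, -1:] :: 'k poly"
  obtain p m n p' m' n' where "f = Fract p (?T ^ m * ?U ^ n)" "g = Fract p' (?T ^ m' * ?U ^ n')"
    using assms by (metis A_algE)
  then have "f + g = Fract (p * (?T ^ m' * ?U ^ n') + p' * (?T ^ m * ?U ^ n)) (?T ^ (m + m') * ?U ^ (n + n'))"
    by (simp add: power_add mult_ac)
  then show ?thesis by (simp only: A_algI)
qed

lemma A_alg_mult:
  assumes "f \<in> A_alg" "g \<in> A_alg" shows "f * g \<in> (A_alg :: 'k::field ratfun set)"
proof -
  let ?T = "[:0, 1:] :: 'k poly" and ?U = "[:1, -1:] :: 'k poly"
  obtain p m n p' m' n' where "f = Fract p (?T ^ m * ?U ^ n)" "g = Fract p' (?T ^ m' * ?U ^ n')"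
    using assms by (metis A_algE)
  then have "f * g = Fract (p * p') (?T ^ (m + m') * ?U ^ (n + n'))"
    by (simp add: power_add mult_ac)
  then show ?thesis by (simp only: A_algI)
qed

lemma A_alg_kconst: "kconst c \<in> (A_alg :: 'k::field ratfun set)"
  using A_algI[of "[:c:]" 0 0] by (simp add: kconst_def)

lemma A_alg_uminus: "f \<in> A_alg \<Longrightarrow> - f \<in> (A_alg :: 'k::field ratfun set)"
  using A_alg_mult[OF A_alg_kconst[of "-1"]] by simp

lemma A_alg_diff: "f \<in> A_alg \<Longrightarrow> g \<in> A_alg \<Longrightarrow> f - g \<in> (A_alg :: 'k::field ratfun set)"
  using A_alg_add[OF _ A_alg_uminus] by (metis diff_conv_add_uminus)

lemma A_alg_numeral: "numeral n \<in> (A_alg :: 'k::field ratfun set)"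
  using A_alg_kconst[of "numeral n"] by simp

lemma A_alg_one: "1 \<in> (A_alg :: 'k::field ratfun set)"
  using A_alg_kconst[of 1] by simp

lemma A_alg_zero: "0 \<in> (A_alg :: 'k::field ratfun set)"
  using A_alg_kconst[of 0] by (simp add: kconst_def Zero_fract_def)

lemma inverse_tvar: "inverse tvar = (Fract 1 [:0, 1:] :: 'k::field ratfun)"
  by (simp add: tvar_def)

lemma tdprime_Fract: "tdprime = (Fract 1 [:1, -1:] :: 'k::field ratfun)"
proof -
  have "1 - tvar = (Fract [:1, -1:] 1 :: 'k ratfun)"
    by (simp add: tvar_def One_fract_def pCons_one[symmetric])
  then show ?thesis by (simp add: tdprime_def)
qed

lemma A_alg_tvar: "tvar \<in> (A_alg :: 'k::field ratfun set)"
  using A_algI[of "[:0, 1:]" 0 0] by (simp add: tvar_def)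

lemma A_alg_inverse_tvar: "inverse tvar \<in> (A_alg :: 'k::field ratfun set)"
  using A_algI[of 1 1 0] by (simp add: inverse_tvar)

lemma A_alg_tprime: "tprime \<in> (A_alg :: 'k::field ratfun set)"
  unfolding tprime_def by (intro A_alg_diff A_alg_one A_alg_inverse_tvar)

lemma A_alg_tdprime: "tdprime \<in> (A_alg :: 'k::field ratfun set)"
  using A_algI[of 1 0 1] by (simp add: tdprime_Fract)

lemmas A_alg_closed = A_alg_add A_alg_mult A_alg_uminus A_alg_diff A_alg_kconst
  A_alg_numeral A_alg_one A_alg_zero A_alg_tvar A_alg_tprime A_alg_tdprime

lemma A_alg_subsetI:
  fixes R :: "'k::field ratfun set"
  assumes const: "\<And>c. kconst c \<in> R" and t: "tvar \<in> R"
    and t_inverse: "inverse tvar \<in> R" and one_minus_t_inverse: "tdprime \<in> R"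
    and add: "\<And>f g. f \<in> R \<Longrightarrow> g \<in> R \<Longrightarrow> f + g \<in> R"
    and mult: "\<And>f g. f \<in> R \<Longrightarrow> g \<in> R \<Longrightarrow> f * g \<in> R"
  shows "A_alg \<subseteq> R"
proof
  have power: "f ^ n \<in> R" if "f \<in> R" for f n
    using that const[of 1] by (induction n) (auto intro: mult)
  have poly: "Fract p 1 \<in> R" for p
  proof (induction p)
    case 0
    then show ?case using const[of 0] by (simp add: kconst_def Zero_fract_def)
  next
    case (pCons a p)
    have "pCons a p = [:a:] + [:0, 1:] * p"
      by (simp add: mult_pCons_left)
    then have "Fract (pCons a p) 1 = kconst a + tvar * Fract p 1"
      by (simp add: kconst_def tvar_def)
    then show ?case using pCons.IH by (simp add: add mult const t)
  qed
  fix f :: "'k ratfun" assume "f \<in> A_alg"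
  then obtain p m n where "f = Fract p ([:0, 1:] ^ m * [:1, -1:] ^ n)"
    by (rule A_algE)
  then have "f = Fract p 1 * inverse tvar ^ m * tdprime ^ n"
    by (simp add: inverse_tvar tdprime_Fract Fract_power)
  then show "f \<in> R" by (simp add: mult poly power t_inverse one_minus_t_inverse)
qed

lemma mat2_in_sl2A_iff:
  "mat2 a b c d \<in> sl2A \<longleftrightarrow> a \<in> A_alg \<and> b \<in> A_alg \<and> c \<in> A_alg \<and> d \<in> A_alg \<and> a + d = 0"
  by (auto simp: sl2A_def less_2_iff)

lemma sl2A_cases:
  assumes "M \<in> sl2A"
  obtains a b c where "a \<in> A_alg" "b \<in> A_alg" "c \<in> A_alg" "M = mat2 a b c (- a)"
proof -
  have "M \<in> carrier_mat 2 2" "M $$ (0, 0) + M $$ (1, 1) = 0"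
    and entries: "\<And>i j. i < 2 \<Longrightarrow> j < 2 \<Longrightarrow> M $$ (i, j) \<in> A_alg"
    using assms unfolding sl2A_def by auto
  then have "M = mat2 (M $$ (0, 0)) (M $$ (0, 1)) (M $$ (1, 0)) (- M $$ (0, 0))"
    by (metis mat2_eta add.commute eq_neg_iff_add_eq_0)
  from that[OF entries entries entries this] show thesis by simp
qed

lemma lie_gen_subset_sl2A:
  assumes "S \<subseteq> sl2A"
  shows "lie_gen S \<subseteq> sl2A"
proof
  fix M assume "M \<in> lie_gen S"
  then show "M \<in> sl2A"
  proof (induction rule: lie_gen.induct)
    case (gen M)
    then show ?case using assms by blast
  next
    case zero
    then show ?case by (simp add: mat2_zero mat2_in_sl2A_iff A_alg_zero)
  next
    case (add M N)
    then show ?case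
      by (elim sl2A_cases) (simp add: mat2_in_sl2A_iff A_alg_closed)
  next
    case (smult M c)
    then show ?case
      by (elim sl2A_cases) (simp add: mat2_in_sl2A_iff A_alg_closed)
  next
    case (bracket M N)
    then show ?case
      by (elim sl2A_cases) (simp add: lie_bracket_mat2 mat2_in_sl2A_iff A_alg_closed)
  qed
qed

lemma Psi_gens_subset_sl2A: "Psi_gens \<subseteq> sl2A"
  by (auto simp: Psi_gens_def tens_xm tens_ym tens_zm mat2_in_sl2A_iff A_alg_closed)

subsection \<open>Generating \<open>sl\<^sub>2(A)\<close> from its root vectors\<close>

lemma lie_gen_smult_cancel:
  "(c::'k::field) \<noteq> 0 \<Longrightarrow> kconst c \<cdot>\<^sub>m mat2 a b d e \<in> lie_gen S \<Longrightarrow> mat2 a b d e \<in> lie_gen S"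
  using lie_gen.smult[of "kconst c \<cdot>\<^sub>m mat2 a b d e" S "inverse c"]
  by (simp add: kconst_inverse_cancel)

definition upper_coeffs :: "'k::field ratfun mat set \<Rightarrow> 'k ratfun set" where
  "upper_coeffs S = {f. mat2 0 f 0 0 \<in> lie_gen S}"

context
  fixes S :: "'k::field ratfun mat set"
  assumes two_nonzero: "(2::'k) \<noteq> 0"
    and upper_one: "mat2 0 1 0 0 \<in> lie_gen S"
    and lower_one: "mat2 0 0 1 0 \<in> lie_gen S"
begin

lemma diagonal_in_lie_gen: "f \<in> upper_coeffs S \<Longrightarrow> mat2 f 0 0 (- f) \<in> lie_gen S"
  using lie_gen.bracket[OF _ lower_one, of "mat2 0 f 0 0"]
  by (simp add: upper_coeffs_def lie_bracket_mat2)

lemma lower_in_lie_gen_iff: "mat2 0 0 f 0 \<in> lie_gen S \<longleftrightarrow> f \<in> upper_coeffs S"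
proof
  assume "mat2 0 0 f 0 \<in> lie_gen S"
  from lie_gen.bracket[OF lie_gen.bracket[OF upper_one this] upper_one]
  have "kconst 2 \<cdot>\<^sub>m mat2 0 f 0 0 \<in> lie_gen S"
    by (simp add: lie_bracket_mat2)
  then have "mat2 0 f 0 0 \<in> lie_gen S"
    by (rule lie_gen_smult_cancel[OF two_nonzero])
  then show "f \<in> upper_coeffs S" by (simp add: upper_coeffs_def)
next
  assume "f \<in> upper_coeffs S"
  from lie_gen.bracket[OF diagonal_in_lie_gen[OF this] lower_one]
  have "kconst (- 2) \<cdot>\<^sub>m mat2 0 0 f 0 \<in> lie_gen S"
    by (simp add: lie_bracket_mat2)
  then show "mat2 0 0 f 0 \<in> lie_gen S"
    by (rule lie_gen_smult_cancel[rotated]) (simp add: two_nonzero)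
qed

lemma upper_coeffs_add: "f \<in> upper_coeffs S \<Longrightarrow> g \<in> upper_coeffs S \<Longrightarrow> f + g \<in> upper_coeffs S"
  using lie_gen.add by (fastforce simp: upper_coeffs_def)

lemma upper_coeffs_mult: "f \<in> upper_coeffs S \<Longrightarrow> g \<in> upper_coeffs S \<Longrightarrow> f * g \<in> upper_coeffs S"
proof -
  assume f: "f \<in> upper_coeffs S" and g: "g \<in> upper_coeffs S"
  from lie_gen.bracket[OF diagonal_in_lie_gen[OF f], of "mat2 0 g 0 0"] g
  have "kconst 2 \<cdot>\<^sub>m mat2 0 (f * g) 0 0 \<in> lie_gen S"
    by (simp add: upper_coeffs_def lie_bracket_mat2)
  then have "mat2 0 (f * g) 0 0 \<in> lie_gen S"
    by (rule lie_gen_smult_cancel[OF two_nonzero])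
  then show ?thesis by (simp add: upper_coeffs_def)
qed

lemma upper_coeffs_kconst: "kconst c \<in> upper_coeffs S"
  using lie_gen.smult[OF upper_one, of c] by (simp add: upper_coeffs_def)

lemma upper_coeffs_smult_cancel:
  "(c::'k) \<noteq> 0 \<Longrightarrow> kconst c * f \<in> upper_coeffs S \<Longrightarrow> f \<in> upper_coeffs S"
  using lie_gen_smult_cancel[of c 0 f 0 0 S] by (simp add: upper_coeffs_def)

text \<open>For \<open>h = diag(1, -1)\<close>, \<open>ad h\<close> scales the upper and lower entries by \<open>2\<close> and \<open>-2\<close>
  and kills the diagonal, so \<open>(ad h)\<^sup>2 \<plusminus> 2 ad h\<close> isolates \<open>8\<close> times either entry.\<close>

lemma offdiagonal_in_upper_coeffs:
  assumes "mat2 a b c d \<in> lie_gen S"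
  shows "b \<in> upper_coeffs S" and "c \<in> upper_coeffs S"
proof -
  let ?h = "mat2 1 0 0 (-1)"
  have h: "?h \<in> lie_gen S"
    using diagonal_in_lie_gen[OF upper_coeffs_kconst[of 1]] by simp
  have ad: "lie_bracket ?h (mat2 a b c d) = mat2 0 (2 * b) (- 2 * c) 0"
    and ad2: "lie_bracket ?h (mat2 0 (2 * b) (- 2 * c) 0) = mat2 0 (4 * b) (4 * c) 0"
    by (simp_all add: lie_bracket_mat2)
  have ad_in: "mat2 0 (2 * b) (- 2 * c) 0 \<in> lie_gen S"
    using lie_gen.bracket[OF h assms] by (simp only: ad)
  have ad2_in: "mat2 0 (4 * b) (4 * c) 0 \<in> lie_gen S"
    using lie_gen.bracket[OF h ad_in] by (simp only: ad2)
  have eight: "(8::'k) \<noteq> 0"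
    using two_nonzero by (rule eight_nonzero)
  have "kconst 8 \<cdot>\<^sub>m mat2 0 b 0 0 \<in> lie_gen S"
    using lie_gen.add[OF lie_gen.smult[OF ad_in, of 2] ad2_in] by simp
  then show "b \<in> upper_coeffs S"
    using lie_gen_smult_cancel[OF eight] by (simp add: upper_coeffs_def)
  have "kconst 8 \<cdot>\<^sub>m mat2 0 0 c 0 \<in> lie_gen S"
    using lie_gen.add[OF lie_gen.smult[OF ad_in, of "- 2"] ad2_in] by simp
  then show "c \<in> upper_coeffs S"
    using lie_gen_smult_cancel[OF eight] lower_in_lie_gen_iff by blast
qed

lemma sl2A_subset_lie_gen:
  assumes "A_alg \<subseteq> upper_coeffs S"
  shows "sl2A \<subseteq> lie_gen S"
proof
  fix M :: "'k ratfun mat" assume "M \<in> sl2A"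
  then obtain a b c where abc: "a \<in> A_alg" "b \<in> A_alg" "c \<in> A_alg" and M: "M = mat2 a b c (- a)"
    by (rule sl2A_cases)
  have "mat2 a 0 0 (- a) + mat2 0 b 0 0 + mat2 0 0 c 0 \<in> lie_gen S"
    using abc assms diagonal_in_lie_gen lower_in_lie_gen_iff
    by (intro lie_gen.add) (auto simp: upper_coeffs_def)
  then show "M \<in> lie_gen S" by (simp add: M)
qed

end

subsection \<open>The image of \<open>\<Psi>\<close>\<close>

lemma Psi_upper_one: "(2::'k::field) \<noteq> 0 \<Longrightarrow> mat2 0 1 0 0 \<in> lie_gen (Psi_gens :: 'k ratfun mat set)"
  using lie_gen.add[OF lie_gen.gen lie_gen.gen, of "tens xm 1" Psi_gens "tens zm 1"]
    lie_gen_smult_cancel[of 2 0 1 0 0 Psi_gens]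
  by (simp add: Psi_gens_def tens_xm tens_zm)

lemma Psi_lower_one: "(2::'k::field) \<noteq> 0 \<Longrightarrow> mat2 0 0 1 0 \<in> lie_gen (Psi_gens :: 'k ratfun mat set)"
  using lie_gen.add[OF lie_gen.gen lie_gen.gen, of "tens ym 1" Psi_gens "tens zm 1"]
    lie_gen_smult_cancel[of "- 2" 0 0 1 0 Psi_gens]
  by (simp add: Psi_gens_def tens_ym tens_zm)

lemma A_alg_subset_Psi_upper_coeffs:
  assumes two: "(2::'k::field) \<noteq> 0"
  shows "A_alg \<subseteq> upper_coeffs (Psi_gens :: 'k ratfun mat set)"
proof -
  let ?C = "upper_coeffs (Psi_gens :: 'k ratfun mat set)"
  note generated = Psi_upper_one[OF two] Psi_lower_one[OF two]
  note in_coeffs = offdiagonal_in_upper_coeffs[OF two generated]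
  note cancel = upper_coeffs_smult_cancel[OF two generated]
  have "tens ym tvar + tens zm (tvar - 1) \<in> lie_gen Psi_gens"
    by (rule lie_gen.gen) (unfold Psi_gens_def, blast)
  from in_coeffs(2)[OF this[unfolded tens_ym tens_zm mat2_add]]
  have "kconst (- 2) * tvar \<in> ?C" by simp
  then have tvar: "tvar \<in> ?C"
    by (rule cancel[rotated]) (simp add: two)
  have "tens zm tprime + tens xm (tprime - 1) \<in> lie_gen Psi_gens"
    by (rule lie_gen.gen) (unfold Psi_gens_def, blast)
  from in_coeffs(1)[OF this[unfolded tens_xm tens_zm mat2_add]]
  have "kconst (- 2) * inverse tvar \<in> ?C"
    by (simp add: tprime_def algebra_simps)
  then have inverse_tvar: "inverse tvar \<in> ?C"
    by (rule cancel[rotated]) (simp add: two)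
  have "tens xm tdprime + tens ym (tdprime - 1) \<in> lie_gen Psi_gens"
    by (rule lie_gen.gen) (unfold Psi_gens_def, blast)
  from in_coeffs(1)[OF this[unfolded tens_xm tens_ym mat2_add]]
  have "kconst 2 * tdprime \<in> ?C" by simp
  then have tdprime: "tdprime \<in> ?C"
    by (rule cancel[rotated]) (simp add: two)
  show ?thesis
  proof (rule A_alg_subsetI[OF _ tvar inverse_tvar tdprime])
    show "kconst c \<in> ?C" for c
      by (rule upper_coeffs_kconst[OF two generated])
    show "f + g \<in> ?C" if "f \<in> ?C" "g \<in> ?C" for f g
      by (rule upper_coeffs_add[OF two generated that])
    show "f * g \<in> ?C" if "f \<in> ?C" "g \<in> ?C" for f g
      by (rule upper_coeffs_mult[OF two generated that])
  qed
qed

theorem corollary1p3: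
  fixes dummy :: "'k::field itself"
  assumes "(2::'k) \<noteq> 0"
  shows "lie_gen (Psi_gens :: 'k ratfun mat set) = sl2A"
proof
  show "lie_gen Psi_gens \<subseteq> (sl2A :: 'k ratfun mat set)"
    by (rule lie_gen_subset_sl2A[OF Psi_gens_subset_sl2A])
  show "sl2A \<subseteq> lie_gen (Psi_gens :: 'k ratfun mat set)"
    by (rule sl2A_subset_lie_gen[OF assms Psi_upper_one[OF assms] Psi_lower_one[OF assms]
          A_alg_subset_Psi_upper_coeffs[OF assms]])
qed

end
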